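(* Let $F,\theta \geq 1$ be integers with $F \geq 4\theta$, and let $p_j = \binom{F}{j} 2^{-F}$ for $j = 0,\ldots,F$. Then $$\sum_{j \leq \theta} (-j)\, p_j + \sum_{\theta < j \leq F} \big(j + 2(1 - j/F - \theta)\big) p_j > 0.$$
   Context: This quantity is the expected value $E\phi(e)$ of the weight $\phi(e) = -\zeta_0(e)$ if $\zeta_0(e) \leq \theta$ and $\phi(e) = \zeta_0(e) + 2(X - \theta)$ otherwise, where $\zeta_0(e) \sim \mathrm{Binomial}(F,1/2)$ and, given $\zeta_0(e)$, $X$ is Bernoulli$(1 - \zeta_0(e)/F)$. *)

theory Defs
  imports Complex_Main
begin

end

theory Submission
  imports Defs
begin

text \<open>Write the summand at \<open>j\<close> as \<open>(j - 2\<theta>) p\<^sub>j + r\<^sub>j\<close>, where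
  \<open>r\<^sub>j = 2(\<theta> - j) p\<^sub>j\<close> for \<open>j \<le> \<theta>\<close> and \<open>r\<^sub>j = 2(1 - j/F) p\<^sub>j\<close> otherwise.
  The binomial distribution has mean \<open>F/2 \<ge> 2\<theta>\<close>, so the first part sums to a
  nonnegative number, while every \<open>r\<^sub>j\<close> is nonnegative and \<open>r\<^sub>0 = 2\<theta> 2\<^sup>-\<^sup>F > 0\<close>.\<close>

lemma sum_binomial_weights:
  "(\<Sum>j\<le>n. real (n choose j) / 2 ^ n) = 1"
proof -
  have "(\<Sum>j\<le>n. real (n choose j)) = real (\<Sum>j\<le>n. n choose j)"
    by simp
  also have "\<dots> = 2 ^ n"
    by (simp add: choose_row_sum)
  finally show ?thesis by (simp add: sum_divide_distrib[symmetric])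
qed

lemma binomial_weights_mean:
  "(\<Sum>j\<le>n. real j * (real (n choose j) / 2 ^ n)) = real n / 2"
proof (cases n)
  case 0
  then show ?thesis by simp
next
  case (Suc m)
  have "(\<Sum>j\<le>n. real j * real (n choose j)) = real (\<Sum>j\<le>n. j * (n choose j))"
    by simp
  also have "\<dots> = real (n * 2 ^ m)"
    using Suc by (simp only: choose_linear_sum diff_Suc_1)
  finally show ?thesis
    using Suc by (simp add: sum_divide_distrib[symmetric] field_simps)
qed

lemma sum_binomial_weights_affine:
  "(\<Sum>j\<le>n. (a * real j + b) * (real (n choose j) / 2 ^ n)) = a * real n / 2 + b"
proof -
  have "(\<Sum>j\<le>n. (a * real j + b) * (real (n choose j) / 2 ^ n))
      = (\<Sum>j\<le>n. a * (real j * (real (n choose j) / 2 ^ n))) + (\<Sum>j\<le>n. b * (real (n choose j) / 2 ^ n))"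
    by (simp only: distrib_right mult.assoc sum.distrib)
  also have "\<dots> = a * (\<Sum>j\<le>n. real j * (real (n choose j) / 2 ^ n)) + b * (\<Sum>j\<le>n. real (n choose j) / 2 ^ n)"
    by (simp only: sum_distrib_left)
  finally show ?thesis
    by (simp only: sum_binomial_weights binomial_weights_mean)
qed

lemma sum_split_atMost:
  fixes f g :: "nat \<Rightarrow> 'a::comm_monoid_add"
  assumes "k \<le> n"
  shows "(\<Sum>j\<in>{0..k}. f j) + (\<Sum>j\<in>{k<..n}. g j) = (\<Sum>j\<le>n. if j \<le> k then f j else g j)"
proof -
  have "{..n} \<inter> {j. j \<le> k} = {0..k}" "{..n} \<inter> - {j. j \<le> k} = {k<..n}"
    using assms by auto
  then show ?thesis
    by (simp add: sum.If_cases)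
qed

theorem lemma5:
  fixes F \<theta> :: nat
  assumes "F \<ge> 1" and "\<theta> \<ge> 1" and "F \<ge> 4 * \<theta>"
  defines "p \<equiv> (\<lambda>j::nat. real (F choose j) / 2 ^ F)"
  shows "(\<Sum>j\<in>{0..\<theta>}. (- real j) * p j)
         + (\<Sum>j\<in>{\<theta><..F}. (real j + 2 * (1 - real j / real F - real \<theta>)) * p j) > 0"
proof -
  define r where "r j = (if j \<le> \<theta> then 2 * (real \<theta> - real j) else 2 * (1 - real j / real F)) * p j"
    for j
  have "(\<Sum>j\<le>F. (real j - 2 * real \<theta>) * p j) = real F / 2 - 2 * real \<theta>"
    using sum_binomial_weights_affine[of 1 "- 2 * real \<theta>" F] by (simp add: p_def)
  then have mean_part: "(\<Sum>j\<le>F. (real j - 2 * real \<theta>) * p j) \<ge> 0"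
    using assms(3) by linarith
  have "r j \<ge> 0" if "j \<le> F" for j
    using that assms(1) by (auto simp: r_def p_def divide_le_eq)
  moreover have "r 0 > 0"
    using assms(2) by (simp add: r_def p_def)
  ultimately have remainder_pos: "(\<Sum>j\<le>F. r j) > 0"
    by (intro sum_pos2[of _ 0]) auto
  have "(\<Sum>j\<in>{0..\<theta>}. (- real j) * p j)
         + (\<Sum>j\<in>{\<theta><..F}. (real j + 2 * (1 - real j / real F - real \<theta>)) * p j)
      = (\<Sum>j\<le>F. if j \<le> \<theta> then (- real j) * p j
                    else (real j + 2 * (1 - real j / real F - real \<theta>)) * p j)"
    using assms(3) by (intro sum_split_atMost) simp
  also have "\<dots> = (\<Sum>j\<le>F. (real j - 2 * real \<theta>) * p j + r j)"
    unfolding r_def by (intro sum.cong refl) (simp add: algebra_simps)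
  also have "\<dots> = (\<Sum>j\<le>F. (real j - 2 * real \<theta>) * p j) + (\<Sum>j\<le>F. r j)"
    by (rule sum.distrib)
  also have "\<dots> > 0"
    using mean_part remainder_pos by linarith
  finally show ?thesis .
qed

end
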